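(* Let $\Sigma$ be a $d\times d$ symmetric positive definite matrix, $\Omega=\Sigma^{-1}$, and consider the target $\mathcal{N}_d(0,\Sigma)$, whose log-density gradient at $x$ is $-\Omega x$. Let $X_t\ne Y_t$ be nonzero points, $n_x=-\Omega X_t/\lVert\Omega X_t\rVert$, $n_y=-\Omega Y_t/\lVert\Omega Y_t\rVert$, $e=(X_t-Y_t)/\lVert X_t-Y_t\rVert$, and let $Z_x,Z_y\sim\mathcal{N}_d(0,I_d)$ be coupled by CRN ($Z_y=Z_x$), reflection ($Z_y=Z_x-2(e^\top Z_x)e$) or GCRN ($Z_x=Z-(n_x^\top Z)n_x+Z_1n_x$, $Z_y=Z-(n_y^\top Z)n_y+Z_1n_y$ with $Z\sim\mathcal{N}_d(0,I_d)$, $Z_1\sim\mathcal{N}(0,1)$ independent). Then $\rho=\mathrm{Corr}(n_x^\top Z_x,n_y^\top Z_y)=\mathrm{Cov}(n_x^\top Z_x,n_y^\top Z_y)$ is $$\rho_{\mathrm{crn}}=\frac{v_1}{\sqrt{x_1y_1}},\quad \rho_{\mathrm{refl}}=\frac{v_1}{\sqrt{x_1y_1}}+\frac{1}{z_1^2z_{-1}^2}\frac{2(x_0-v_0)(y_0-v_0)}{\sqrt{x_1y_1}(x_{-1}+y_{-1}-2v_{-1})},\quad \rho_{\mathrm{gcrn}}=1.$$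
   Context: Notation: $\lVert x\rVert_A^2=x^\top Ax$, $\langle x,y\rangle_A=x^\top Ay$. The matrix $\Omega=\Omega_{(d)}$ is a member of a sequence satisfying: for $Z_{(d)}\sim\mathcal{N}_d(0,I_d)$ and each $k\in\mathbb{Z}$, $z_k^2=\lim_{d\to\infty}\lVert Z_{(d)}\rVert^2_{\Omega_{(d)}^k}/d$ exists in $L_2$ with $z_k\in(0,\infty)$ (so $z_0=1$). For $k\in\mathbb{Z}$, $(x_{k-1},y_{k-1},v_{k-1})=\frac{1}{z_{k-1}^2d}\big(\lVert X_t\rVert^2_{\Omega^k},\lVert Y_t\rVert^2_{\Omega^k},\langle X_t,Y_t\rangle_{\Omega^k}\big)$. *)

theory Defs
  imports "HOL-Probability.Probability"
begin

fun matpow :: "real^'n^'n \<Rightarrow> nat \<Rightarrow> real^'n^'n" where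
  "matpow A 0 = mat 1"
| "matpow A (Suc k) = A ** matpow A k"

definition qf :: "real^'n^'n \<Rightarrow> real^'n \<Rightarrow> real^'n \<Rightarrow> real" where
  "qf A x y = x \<bullet> (A *v y)"

text \<open>Paper's normalised quantities for index j = k - 1 (j \<ge> -1):
  x_j = |X|^2_{Omega^(j+1)} / (z_j^2 d), y_j likewise, v_j = <X,Y>_{Omega^(j+1)} / (z_j^2 d).\<close>
definition nq :: "real^'n^'n \<Rightarrow> (int \<Rightarrow> real) \<Rightarrow> real^'n \<Rightarrow> real^'n \<Rightarrow> int \<Rightarrow> real" where
  "nq Om z X Y j = qf (matpow Om (nat (j + 1))) X Y / ((z j)\<^sup>2 * real CARD('n))"

definition covar :: "'a measure \<Rightarrow> ('a \<Rightarrow> real) \<Rightarrow> ('a \<Rightarrow> real) \<Rightarrow> real" where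
  "covar M U V = (LINT \<omega>|M. (U \<omega> - (LINT \<omega>|M. U \<omega>)) * (V \<omega> - (LINT \<omega>|M. V \<omega>)))"

definition correl :: "'a measure \<Rightarrow> ('a \<Rightarrow> real) \<Rightarrow> ('a \<Rightarrow> real) \<Rightarrow> real" where
  "correl M U V = covar M U V / sqrt (covar M U U * covar M V V)"

end

theory Submission
  imports Defs
begin

text \<open>Under each coupling both statistics are linear forms \<open>a \<bullet> Z + \<alpha> * Z1\<close> in independent
  standard normals, so their covariance is the inner product of the coefficient vectors; as all
  these coefficient vectors are unit vectors, it is also their correlation. For CRN it is
  \<open>n\<^sub>x \<bullet> n\<^sub>y\<close>; the reflection coupling replaces \<open>n\<^sub>y\<close> by its mirror image in \<open>e\<^sup>\<perp>\<close>, which adds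
  \<open>-2 (n\<^sub>x \<bullet> e) (n\<^sub>y \<bullet> e)\<close>; under GCRN both statistics collapse to \<open>Z1\<close>. The closed forms come
  from writing these inner products through the symmetric matrix \<open>\<Omega>\<close>.\<close>

lemma std_normal_moments:
  assumes D: "distributed M lborel W std_normal_density"
  shows "integrable M W" "integral\<^sup>L M W = 0"
    and "integrable M (\<lambda>\<omega>. W \<omega> * W \<omega>)" "integral\<^sup>L M (\<lambda>\<omega>. W \<omega> * W \<omega>) = 1"
proof -
  show "integrable M W"
    using distributed_integrable[OF D, of "\<lambda>x. x ^ 1"] integrable_std_normal_moment[of 1] by simp
  show "integral\<^sup>L M W = 0"
    using distributed_integral[OF D, of "\<lambda>x. x ^ (2 * 0 + 1)"] integral_std_normal_moment_odd[of 0]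
    by simp
  show "integrable M (\<lambda>\<omega>. W \<omega> * W \<omega>)"
    using distributed_integrable[OF D, of "\<lambda>x. x ^ 2"] integrable_std_normal_moment[of 2]
    by (simp add: power2_eq_square)
  show "integral\<^sup>L M (\<lambda>\<omega>. W \<omega> * W \<omega>) = 1"
    using distributed_integral[OF D, of "\<lambda>x. x ^ (2 * 1)"] integral_std_normal_moment_even[of 1]
    by (simp add: power2_eq_square)
qed

lemma integral_mult_indep_std_normal:
  assumes P: "prob_space M"
    and ind: "prob_space.indep_vars M (\<lambda>_. borel) W I" and "i \<in> I" "k \<in> I"
    and D: "\<And>i. i \<in> I \<Longrightarrow> distributed M lborel (W i) std_normal_density"
  shows "integrable M (\<lambda>\<omega>. W i \<omega> * W k \<omega>)"
    and "integral\<^sup>L M (\<lambda>\<omega>. W i \<omega> * W k \<omega>) = (if i = k then 1 else 0)"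
proof -
  have "integrable M (\<lambda>\<omega>. W i \<omega> * W k \<omega>) \<and>
      integral\<^sup>L M (\<lambda>\<omega>. W i \<omega> * W k \<omega>) = (if i = k then 1 else 0)"
  proof (cases "i = k")
    case True
    then show ?thesis using std_normal_moments[OF D] \<open>k \<in> I\<close> by simp
  next
    case False
    have ik: "prob_space.indep_vars M (\<lambda>_. borel) W {i, k}"
      using prob_space.indep_vars_subset[OF P ind] \<open>i \<in> I\<close> \<open>k \<in> I\<close> by auto
    have m: "integrable M (W j)" "integral\<^sup>L M (W j) = 0" if "j \<in> {i, k}" for j
      using std_normal_moments[OF D] that \<open>i \<in> I\<close> \<open>k \<in> I\<close> by auto
    have "integrable M (\<lambda>\<omega>. \<Prod>j\<in>{i, k}. W j \<omega>)"
      using prob_space.indep_vars_integrable[OF P _ ik] m by auto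
    moreover have "integral\<^sup>L M (\<lambda>\<omega>. \<Prod>j\<in>{i, k}. W j \<omega>) = (\<Prod>j\<in>{i, k}. integral\<^sup>L M (W j))"
      using prob_space.indep_vars_lebesgue_integral[OF P _ ik] m by auto
    ultimately show ?thesis using False m by simp
  qed
  then show "integrable M (\<lambda>\<omega>. W i \<omega> * W k \<omega>)"
    and "integral\<^sup>L M (\<lambda>\<omega>. W i \<omega> * W k \<omega>) = (if i = k then 1 else 0)" by auto
qed

lemma covar_sum_indep_std_normal:
  fixes W :: "'i::finite \<Rightarrow> 'a \<Rightarrow> real"
  assumes P: "prob_space M"
    and ind: "prob_space.indep_vars M (\<lambda>_. borel) W UNIV"
    and D: "\<And>i. distributed M lborel (W i) std_normal_density"
  shows "covar M (\<lambda>\<omega>. \<Sum>i\<in>UNIV. c i * W i \<omega>) (\<lambda>\<omega>. \<Sum>i\<in>UNIV. d i * W i \<omega>)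
         = (\<Sum>i\<in>UNIV. c i * d i)"
proof -
  note pair = integral_mult_indep_std_normal[OF P ind UNIV_I UNIV_I D]
  have mean: "integral\<^sup>L M (\<lambda>\<omega>. \<Sum>i\<in>UNIV. c i * W i \<omega>) = 0" for c
    using std_normal_moments[OF D] by (simp add: integral_sum)
  have "(\<lambda>\<omega>. (\<Sum>i\<in>UNIV. c i * W i \<omega>) * (\<Sum>k\<in>UNIV. d k * W k \<omega>))
      = (\<lambda>\<omega>. \<Sum>i\<in>UNIV. \<Sum>k\<in>UNIV. (c i * d k) * (W i \<omega> * W k \<omega>))"
    by (simp add: sum_product algebra_simps)
  moreover have "integral\<^sup>L M (\<lambda>\<omega>. \<Sum>i\<in>UNIV. \<Sum>k\<in>UNIV. (c i * d k) * (W i \<omega> * W k \<omega>))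
      = (\<Sum>i\<in>UNIV. \<Sum>k\<in>UNIV. (c i * d k) * (if i = k then 1 else 0))"
    using pair by (simp add: integral_sum)
  ultimately show ?thesis
    unfolding covar_def mean by (simp add: if_distrib cong: if_cong)
qed

lemma sum_UNIV_option:
  fixes f :: "'n::finite option \<Rightarrow> 'b::comm_monoid_add"
  shows "(\<Sum>i\<in>UNIV. f i) = f None + (\<Sum>j\<in>UNIV. f (Some j))"
  by (simp add: UNIV_option_conv sum.reindex)

lemma covar_inner_indep_std_normal:
  fixes Z :: "'a \<Rightarrow> real^'n" and Z1 :: "'a \<Rightarrow> real"
  assumes P: "prob_space M"
    and indep: "prob_space.indep_vars M (\<lambda>_. borel)
                  (\<lambda>i \<omega>. case i of Some j \<Rightarrow> Z \<omega> $ j | None \<Rightarrow> Z1 \<omega>) (UNIV :: 'n option set)"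
    and distZ: "\<forall>j. distributed M lborel (\<lambda>\<omega>. Z \<omega> $ j) std_normal_density"
    and distZ1: "distributed M lborel Z1 std_normal_density"
  shows "covar M (\<lambda>\<omega>. a \<bullet> Z \<omega> + \<alpha> * Z1 \<omega>) (\<lambda>\<omega>. b \<bullet> Z \<omega> + \<beta> * Z1 \<omega>) = a \<bullet> b + \<alpha> * \<beta>"
proof -
  define W where "W = (\<lambda>i \<omega>. case i of Some j \<Rightarrow> Z \<omega> $ j | None \<Rightarrow> Z1 \<omega>)"
  define coeff :: "real^'n \<Rightarrow> real \<Rightarrow> 'n option \<Rightarrow> real"
    where "coeff = (\<lambda>a \<alpha> i. case i of Some j \<Rightarrow> a $ j | None \<Rightarrow> \<alpha>)"
  have D: "distributed M lborel (W i) std_normal_density" for i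
    using distZ distZ1 by (cases i) (auto simp: W_def)
  have linear_form: "(\<lambda>\<omega>. a \<bullet> Z \<omega> + \<alpha> * Z1 \<omega>) = (\<lambda>\<omega>. \<Sum>i\<in>UNIV. coeff a \<alpha> i * W i \<omega>)"
    for a \<alpha>
    by (simp add: sum_UNIV_option W_def coeff_def inner_vec_def add.commute)
  have "covar M (\<lambda>\<omega>. \<Sum>i\<in>UNIV. coeff a \<alpha> i * W i \<omega>) (\<lambda>\<omega>. \<Sum>i\<in>UNIV. coeff b \<beta> i * W i \<omega>)
      = (\<Sum>i\<in>UNIV. coeff a \<alpha> i * coeff b \<beta> i)"
    using covar_sum_indep_std_normal[OF P _ D] indep by (simp add: W_def)
  also have "\<dots> = a \<bullet> b + \<alpha> * \<beta>"
    by (simp add: sum_UNIV_option coeff_def inner_vec_def)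
  finally show ?thesis by (simp add: linear_form)
qed

lemma correl_eq_covar:
  assumes "covar M U U = 1" and "covar M V V = 1"
  shows "correl M U V = covar M U V"
  using assms by (simp add: correl_def)

lemma matrix_inv_pos_definite:
  fixes A :: "real^'n^'n"
  assumes pd: "\<forall>u. u \<noteq> 0 \<longrightarrow> u \<bullet> (A *v u) > 0"
  shows "A ** matrix_inv A = mat 1" and "matrix_inv A ** A = mat 1"
proof -
  have "inj ((*v) A)"
  proof (rule injI)
    fix u w assume "A *v u = A *v w"
    then have "(u - w) \<bullet> (A *v (u - w)) = 0" by (simp add: matrix_vector_mult_diff_distrib)
    then show "u = w" using pd[rule_format, of "u - w"] by auto
  qed
  then obtain B where "B ** A = mat 1" using matrix_left_invertible_injective by blast
  then have "A ** B = mat 1 \<and> B ** A = mat 1" using matrix_left_right_inverse by blast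
  then have "A ** matrix_inv A = mat 1 \<and> matrix_inv A ** A = mat 1"
    unfolding matrix_inv_def by (rule someI)
  then show "A ** matrix_inv A = mat 1" and "matrix_inv A ** A = mat 1" by auto
qed

lemma symmetric_matrix_inverse:
  fixes A B :: "real^'n^'n"
  assumes "transpose A = A" and "A ** B = mat 1" and "B ** A = mat 1"
  shows "transpose B = B"
proof -
  have "transpose B ** A = mat 1"
    using assms by (metis matrix_transpose_mul transpose_mat)
  have "transpose B = transpose B ** (A ** B)"
    using assms(2) by simp
  also have "\<dots> = (transpose B ** A) ** B"
    by (simp add: matrix_mul_assoc)
  also have "\<dots> = B"
    using \<open>transpose B ** A = mat 1\<close> by simp
  finally show ?thesis .
qed

lemma inner_symmetric_matrix_commute:
  fixes A :: "real^'n^'n"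
  assumes "transpose A = A"
  shows "u \<bullet> (A *v w) = w \<bullet> (A *v u)"
  by (metis assms dot_lmul_matrix inner_commute transpose_matrix_vector)

lemma inner_symmetric_matrix_square:
  fixes A :: "real^'n^'n"
  assumes "transpose A = A"
  shows "u \<bullet> ((A ** A) *v w) = (A *v u) \<bullet> (A *v w)"
  by (metis assms inner_commute inner_symmetric_matrix_commute matrix_vector_mul_assoc)

lemma nq_minus_one: "nq Om z U V (-1) = U \<bullet> V / ((z (-1))\<^sup>2 * CARD('n))"
  for Om :: "real^'n^'n"
  by (simp add: nq_def qf_def)

lemma nq_zero: "z 0 = 1 \<Longrightarrow> nq Om z U V 0 = U \<bullet> (Om *v V) / CARD('n)"
  for Om :: "real^'n^'n"
  by (simp add: nq_def qf_def)

lemma nq_one: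
  fixes Om :: "real^'n^'n"
  assumes "transpose Om = Om"
  shows "nq Om z U V 1 = (Om *v U) \<bullet> (Om *v V) / ((z 1)\<^sup>2 * CARD('n))"
proof -
  have "matpow Om (nat (1 + 1)) = Om ** Om" by (simp add: numeral_2_eq_2)
  then show ?thesis
    by (simp add: nq_def qf_def inner_symmetric_matrix_square[OF assms])
qed

lemma sqrt_nq_one:
  fixes Om :: "real^'n^'n"
  assumes "transpose Om = Om"
  shows "sqrt (nq Om z X X 1 * nq Om z Y Y 1)
         = norm (Om *v X) * norm (Om *v Y) / ((z 1)\<^sup>2 * CARD('n))"
proof -
  have "nq Om z X X 1 * nq Om z Y Y 1
      = (norm (Om *v X) * norm (Om *v Y) / ((z 1)\<^sup>2 * CARD('n)))\<^sup>2"
    by (simp add: nq_one[OF assms] power2_norm_eq_inner[symmetric] power_mult_distrib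
        power_divide power2_eq_square)
  then show ?thesis by simp
qed

lemma inner_normalized_gradients:
  fixes Om :: "real^'n^'n"
  assumes "transpose Om = Om" and "z 1 \<noteq> 0"
  shows "(- (1 / norm (Om *v X)) *\<^sub>R (Om *v X)) \<bullet> (- (1 / norm (Om *v Y)) *\<^sub>R (Om *v Y))
         = nq Om z X Y 1 / sqrt (nq Om z X X 1 * nq Om z Y Y 1)"
  unfolding sqrt_nq_one[OF assms(1)] using assms by (simp add: nq_one)

lemma reflection_correction:
  fixes Om :: "real^'n^'n"
  assumes symm: "transpose Om = Om"
    and "Om *v X \<noteq> 0" and "Om *v Y \<noteq> 0" and "X \<noteq> Y"
    and z0: "z 0 = 1" and "z 1 > 0" and "z (-1) > 0"
  defines "nx \<equiv> - (1 / norm (Om *v X)) *\<^sub>R (Om *v X)"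
    and "ny \<equiv> - (1 / norm (Om *v Y)) *\<^sub>R (Om *v Y)"
    and "e \<equiv> (1 / norm (X - Y)) *\<^sub>R (X - Y)"
  shows "- 2 * (ny \<bullet> e) * (nx \<bullet> e)
         = (1 / ((z 1)\<^sup>2 * (z (-1))\<^sup>2)) *
           (2 * (nq Om z X X 0 - nq Om z X Y 0) * (nq Om z Y Y 0 - nq Om z X Y 0) /
            (sqrt (nq Om z X X 1 * nq Om z Y Y 1) *
              (nq Om z X X (-1) + nq Om z Y Y (-1) - 2 * nq Om z X Y (-1))))"
proof -
  define d where "d = real CARD('n)"
  define a where "a = nq Om z X X 0 - nq Om z X Y 0"
  define b where "b = nq Om z Y Y 0 - nq Om z X Y 0"
  define s where "s = norm (X - Y)"
  have "d > 0" by (simp add: d_def)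
  have "s > 0" using \<open>X \<noteq> Y\<close> by (simp add: s_def)
  have "(Om *v X) \<bullet> (X - Y) = d * a"
    using \<open>d > 0\<close> inner_symmetric_matrix_commute[OF symm, of X Y]
    by (simp add: a_def nq_zero[where z = z, OF z0] d_def inner_diff_right inner_commute
        right_diff_distrib)
  then have nxe: "nx \<bullet> e = - d * a / (norm (Om *v X) * s)"
    by (simp add: nx_def e_def s_def)
  have "(Om *v Y) \<bullet> (X - Y) = - d * b"
    using \<open>d > 0\<close>
    by (simp add: b_def nq_zero[where z = z, OF z0] d_def inner_diff_right inner_commute
        right_diff_distrib)
  then have nye: "ny \<bullet> e = d * b / (norm (Om *v Y) * s)"
    by (simp add: ny_def e_def s_def)
  have dist: "nq Om z X X (-1) + nq Om z Y Y (-1) - 2 * nq Om z X Y (-1)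
      = s\<^sup>2 / ((z (-1))\<^sup>2 * d)"
    using \<open>d > 0\<close> \<open>z (-1) > 0\<close>
    by (simp add: nq_minus_one d_def s_def power2_norm_eq_inner inner_diff_left inner_diff_right
        inner_commute field_simps)
  show ?thesis
    unfolding nxe nye dist sqrt_nq_one[OF symm] a_def[symmetric] b_def[symmetric] d_def[symmetric]
    using assms(2,3) \<open>d > 0\<close> \<open>s > 0\<close> \<open>z 1 > 0\<close> \<open>z (-1) > 0\<close>
    by (simp add: field_simps power2_eq_square)
qed

lemma inner_reflection_swap:
  fixes u w e :: "'a::real_inner"
  shows "u \<bullet> (w - (2 * (e \<bullet> w)) *\<^sub>R e) = (u - (2 * (u \<bullet> e)) *\<^sub>R e) \<bullet> w"
  by (simp add: inner_diff_left inner_diff_right inner_commute)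

lemma inner_reflection_self:
  fixes u e :: "'a::real_inner"
  assumes "e \<bullet> e = 1"
  shows "(u - (2 * (u \<bullet> e)) *\<^sub>R e) \<bullet> (u - (2 * (u \<bullet> e)) *\<^sub>R e) = u \<bullet> u"
  using assms by (simp add: inner_commute algebra_simps)

lemma inner_replace_component:
  fixes w z :: "'a::real_inner"
  assumes "w \<bullet> w = 1"
  shows "w \<bullet> (z - (w \<bullet> z) *\<^sub>R w + t *\<^sub>R w) = t"
  using assms by (simp add: inner_diff_right inner_add_right)

theorem lemma3:
  fixes M :: "'a measure"
    and Sigma Om :: "real^'n^'n"
    and X Y :: "real^'n"
    and z :: "int \<Rightarrow> real"
    and Z :: "'a \<Rightarrow> real^'n"
    and Z1 :: "'a \<Rightarrow> real"
  assumes "prob_space M"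
    and sym: "transpose Sigma = Sigma"
    and pd: "\<forall>u. u \<noteq> 0 \<longrightarrow> u \<bullet> (Sigma *v u) > 0"
    and Om: "Om = matrix_inv Sigma"
    and "X \<noteq> 0" and "Y \<noteq> 0" and "X \<noteq> Y"
    and z0: "z 0 = 1" and zpos: "\<forall>k. z k > 0"
    and indep: "prob_space.indep_vars M (\<lambda>_. borel)
                  (\<lambda>i \<omega>. case i of Some j \<Rightarrow> Z \<omega> $ j | None \<Rightarrow> Z1 \<omega>) (UNIV :: 'n option set)"
    and distZ: "\<forall>j. distributed M lborel (\<lambda>\<omega>. Z \<omega> $ j) std_normal_density"
    and distZ1: "distributed M lborel Z1 std_normal_density"
  shows
   "let nx = - (1 / norm (Om *v X)) *\<^sub>R (Om *v X);
        ny = - (1 / norm (Om *v Y)) *\<^sub>R (Om *v Y);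
        e  = (1 / norm (X - Y)) *\<^sub>R (X - Y);
        x = nq Om z X X; y = nq Om z Y Y; v = nq Om z X Y;
        \<comment> \<open>CRN coupling: Z_x = Z_y = Z\<close>
        Ux_crn = (\<lambda>\<omega>. nx \<bullet> Z \<omega>);
        Uy_crn = (\<lambda>\<omega>. ny \<bullet> Z \<omega>);
        \<comment> \<open>reflection coupling: Z_x = Z, Z_y = Z - 2 (e^T Z) e\<close>
        Ux_refl = (\<lambda>\<omega>. nx \<bullet> Z \<omega>);
        Uy_refl = (\<lambda>\<omega>. ny \<bullet> (Z \<omega> - (2 * (e \<bullet> Z \<omega>)) *\<^sub>R e));
        \<comment> \<open>GCRN coupling\<close>
        Ux_gcrn = (\<lambda>\<omega>. nx \<bullet> (Z \<omega> - (nx \<bullet> Z \<omega>) *\<^sub>R nx + Z1 \<omega> *\<^sub>R nx));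
        Uy_gcrn = (\<lambda>\<omega>. ny \<bullet> (Z \<omega> - (ny \<bullet> Z \<omega>) *\<^sub>R ny + Z1 \<omega> *\<^sub>R ny));
        rho_crn = v 1 / sqrt (x 1 * y 1);
        rho_refl = v 1 / sqrt (x 1 * y 1)
                   + (1 / ((z 1)\<^sup>2 * (z (-1))\<^sup>2)) *
                     (2 * (x 0 - v 0) * (y 0 - v 0) /
                      (sqrt (x 1 * y 1) * (x (-1) + y (-1) - 2 * v (-1))))
    in correl M Ux_crn Uy_crn = rho_crn \<and> covar M Ux_crn Uy_crn = rho_crn
     \<and> correl M Ux_refl Uy_refl = rho_refl \<and> covar M Ux_refl Uy_refl = rho_refl
     \<and> correl M Ux_gcrn Uy_gcrn = 1 \<and> covar M Ux_gcrn Uy_gcrn = 1"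
proof -
  have inv: "Sigma ** Om = mat 1" "Om ** Sigma = mat 1"
    using matrix_inv_pos_definite[OF pd] Om by auto
  have symm: "transpose Om = Om"
    by (rule symmetric_matrix_inverse[OF sym inv])
  have nonzero: "Om *v X \<noteq> 0" "Om *v Y \<noteq> 0"
    using inv(1) \<open>X \<noteq> 0\<close> \<open>Y \<noteq> 0\<close>
    by (metis matrix_vector_mul_assoc matrix_vector_mul_lid matrix_vector_mult_0_right)+
  have z1: "z 1 > 0" and zm: "z (-1) > 0"
    using zpos by auto
  define nx where "nx = - (1 / norm (Om *v X)) *\<^sub>R (Om *v X)"
  define ny where "ny = - (1 / norm (Om *v Y)) *\<^sub>R (Om *v Y)"
  define e where "e = (1 / norm (X - Y)) *\<^sub>R (X - Y)"
  have unit: "nx \<bullet> nx = 1" "ny \<bullet> ny = 1" "e \<bullet> e = 1"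
    using nonzero \<open>X \<noteq> Y\<close> by (simp_all add: nx_def ny_def e_def dot_square_norm power2_eq_square)
  note cov = covar_inner_indep_std_normal[OF \<open>prob_space M\<close> indep distZ distZ1]
  have cov_Z: "covar M (\<lambda>\<omega>. a \<bullet> Z \<omega>) (\<lambda>\<omega>. b \<bullet> Z \<omega>) = a \<bullet> b" for a b
    using cov[of a 0 b 0] by simp
  have cov_Z1: "covar M Z1 Z1 = 1"
    using cov[of 0 1 0 1] by simp
  have crn: "nx \<bullet> ny = nq Om z X Y 1 / sqrt (nq Om z X X 1 * nq Om z Y Y 1)"
    unfolding nx_def ny_def using z1 by (intro inner_normalized_gradients[OF symm]) simp
  note refl = reflection_correction[OF symm nonzero \<open>X \<noteq> Y\<close> z0 z1 zm,
      folded nx_def ny_def e_def]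
  show ?thesis
    unfolding Let_def nx_def[symmetric] ny_def[symmetric] e_def[symmetric]
      inner_reflection_swap inner_replace_component[OF unit(1)] inner_replace_component[OF unit(2)]
    using unit inner_reflection_self[OF unit(3), of ny] refl
    by (simp add: correl_eq_covar cov_Z cov_Z1 crn inner_diff_right)
qed

end
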